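(* Let $\mathcal G$ be a $\sigma$-compact locally compact Hausdorff étale groupoid, $\ell$ a continuous, proper, controlled length function on $\mathcal G$, and $\rho$ the induced extended metric. Let $u\in\mathcal G^{(0)}$ and $R,\varepsilon>0$. Then there are $S\in[R,R+\varepsilon)$, an open neighborhood $V$ of $u$ in $\mathcal G^{(0)}$, an open set $W\subseteq\mathcal G$ and a homeomorphism $f:\bar B_\rho(u,S)\times V\to W$ such that: (1) $f(u,v)=v$ for all $v\in V$; (2) $f(x,u)=x$ for all $x\in\bar B_\rho(u,S)$; (3) $f(\bar B_\rho(u,S)\times\{v\})=\bar B_\rho(v,S)$ for all $v\in V$; (4) $|\rho(x,y)-\rho(f(x,v),f(y,v))|<\varepsilon$ for all $x,y\in\bar B_\rho(u,S)$ and $v\in V$.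
   Context: A length function is $\ell:\mathcal G\to[0,\infty)$ with $\ell(x)=0$ iff $x\in\mathcal G^{(0)}$, $\ell(x^{-1})=\ell(x)$, $\ell(xy)\le\ell(x)+\ell(y)$ for composable $x,y$. It is proper if every $K\subseteq\mathcal G\setminus\mathcal G^{(0)}$ with $\sup_K\ell<\infty$ is precompact, and controlled if $\sup_K\ell<\infty$ for every precompact $K$. The induced extended metric is $\rho(x,y)=\ell(xy^{-1})$ if $s(x)=s(y)$ and $\rho(x,y)=\infty$ otherwise. $\bar B_\rho(x,S)=\{y:\rho(x,y)\le S\}$ (a finite subset of the source fiber of $x$). *)

theory Defs
  imports "HOL-Analysis.Analysis"
begin

text \<open>A groupoid whose arrows are all elements of the type 'g, given by source s,
range r, inverse iv and (partial) multiplication mul; mul x y is meaningful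
when s x = r y.\<close>

definition gunits :: "('g \<Rightarrow> 'g) \<Rightarrow> 'g set" where
  "gunits s = {x. s x = x}"

definition groupoid ::
  "('g \<Rightarrow> 'g) \<Rightarrow> ('g \<Rightarrow> 'g) \<Rightarrow> ('g \<Rightarrow> 'g) \<Rightarrow> ('g \<Rightarrow> 'g \<Rightarrow> 'g) \<Rightarrow> bool" where
  "groupoid s r iv mul \<longleftrightarrow>
     (\<forall>x. s (s x) = s x \<and> r (r x) = r x \<and> s (r x) = r x \<and> r (s x) = s x) \<and>
     (\<forall>x y. s x = r y \<longrightarrow> s (mul x y) = s y \<and> r (mul x y) = r x) \<and>
     (\<forall>x y z. s x = r y \<longrightarrow> s y = r z \<longrightarrow> mul (mul x y) z = mul x (mul y z)) \<and>
     (\<forall>x. mul (r x) x = x \<and> mul x (s x) = x) \<and>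
     (\<forall>x. s (iv x) = r x \<and> r (iv x) = s x \<and> mul x (iv x) = r x \<and> mul (iv x) x = s x)"

definition local_homeomorphism :: "('a::topological_space \<Rightarrow> 'b::topological_space) \<Rightarrow> bool" where
  "local_homeomorphism f \<longleftrightarrow>
     continuous_on UNIV f \<and>
     (\<forall>x. \<exists>U. open U \<and> x \<in> U \<and> open (f ` U) \<and> (\<exists>g. homeomorphism U (f ` U) f g))"

definition topological_groupoid ::
  "('g::topological_space \<Rightarrow> 'g) \<Rightarrow> ('g \<Rightarrow> 'g) \<Rightarrow> ('g \<Rightarrow> 'g) \<Rightarrow> ('g \<Rightarrow> 'g \<Rightarrow> 'g) \<Rightarrow> bool" where
  "topological_groupoid s r iv mul \<longleftrightarrow>
     groupoid s r iv mul \<and> continuous_on UNIV s \<and> continuous_on UNIV r \<and>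
     continuous_on UNIV iv \<and>
     continuous_on {p. s (fst p) = r (snd p)} (\<lambda>p. mul (fst p) (snd p))"

definition etale_groupoid ::
  "('g::topological_space \<Rightarrow> 'g) \<Rightarrow> ('g \<Rightarrow> 'g) \<Rightarrow> ('g \<Rightarrow> 'g) \<Rightarrow> ('g \<Rightarrow> 'g \<Rightarrow> 'g) \<Rightarrow> bool" where
  "etale_groupoid s r iv mul \<longleftrightarrow>
     topological_groupoid s r iv mul \<and> local_homeomorphism s \<and> local_homeomorphism r"

definition sigma_compact_space :: "'a::topological_space itself \<Rightarrow> bool" where
  "sigma_compact_space _ \<longleftrightarrow> (\<exists>K::nat \<Rightarrow> 'a set. (\<forall>n. compact (K n)) \<and> (\<Union>n. K n) = UNIV)"

definition length_function ::
  "('g \<Rightarrow> 'g) \<Rightarrow> ('g \<Rightarrow> 'g) \<Rightarrow> ('g \<Rightarrow> 'g) \<Rightarrow> ('g \<Rightarrow> 'g \<Rightarrow> 'g) \<Rightarrow> ('g \<Rightarrow> real) \<Rightarrow> bool" where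
  "length_function s r iv mul len \<longleftrightarrow>
     (\<forall>x. len x \<ge> 0) \<and> (\<forall>x. len x = 0 \<longleftrightarrow> x \<in> gunits s) \<and>
     (\<forall>x. len (iv x) = len x) \<and>
     (\<forall>x y. s x = r y \<longrightarrow> len (mul x y) \<le> len x + len y)"

text \<open>Precompact = relatively compact (closure compact); the space is Hausdorff.\<close>
definition proper_length :: "('g::topological_space \<Rightarrow> 'g) \<Rightarrow> ('g \<Rightarrow> real) \<Rightarrow> bool" where
  "proper_length s len \<longleftrightarrow>
     (\<forall>K. K \<subseteq> - gunits s \<longrightarrow> bdd_above (len ` K) \<longrightarrow> compact (closure K))"

definition controlled_length :: "('g::topological_space \<Rightarrow> real) \<Rightarrow> bool" where
  "controlled_length len \<longleftrightarrow> (\<forall>K. compact (closure K) \<longrightarrow> bdd_above (len ` K))"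

definition ext_metric ::
  "('g \<Rightarrow> 'g) \<Rightarrow> ('g \<Rightarrow> 'g) \<Rightarrow> ('g \<Rightarrow> 'g \<Rightarrow> 'g) \<Rightarrow> ('g \<Rightarrow> real) \<Rightarrow> 'g \<Rightarrow> 'g \<Rightarrow> ereal" where
  "ext_metric s iv mul len x y = (if s x = s y then ereal (len (mul x (iv y))) else \<infinity>)"

definition closed_ball_rho ::
  "('g \<Rightarrow> 'g) \<Rightarrow> ('g \<Rightarrow> 'g) \<Rightarrow> ('g \<Rightarrow> 'g \<Rightarrow> 'g) \<Rightarrow> ('g \<Rightarrow> real) \<Rightarrow> 'g \<Rightarrow> real \<Rightarrow> 'g set" where
  "closed_ball_rho s iv mul len x S = {y. ext_metric s iv mul len x y \<le> ereal S}"

end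

theory Submission
  imports Defs
begin

text \<open>
  By properness and etaleness, the arrows of length at most \<open>R + \<epsilon>\<close> with source \<open>u\<close> are finitely
  many, so we may pick \<open>S \<in> [R, R + \<epsilon>)\<close> different from all their lengths: every arrow of the
  ball \<open>B(u, S)\<close> then has length strictly below \<open>S\<close>. Each such arrow \<open>x\<close> lies in an open
  bisection, whose local section \<open>\<sigma>\<^sub>x\<close> of the source map passes through \<open>x\<close>, and we put
  \<open>f (x, v) = \<sigma>\<^sub>x v\<close>. By continuity, for units \<open>v\<close> near \<open>u\<close> the arrows \<open>\<sigma>\<^sub>x v\<close> stay in
  pairwise disjoint neighbourhoods, keep length \<open>< S\<close>, and the lengths of \<open>\<sigma>\<^sub>x v (\<sigma>\<^sub>y v)\<inverse>\<close>
  stay \<open>\<epsilon>\<close>-close to those of \<open>x y\<inverse>\<close>. Finally, since the non-unit arrows of length \<open>\<le> S\<close>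
  have compact closure, the source map sends the part of that closure outside the bisections to a
  closed set missing \<open>u\<close>; so near \<open>u\<close> no arrow of length \<open>\<le> S\<close> escapes the bisections and
  \<open>f\<close> maps \<open>B(u, S) \<times> {v}\<close> onto \<open>B(v, S)\<close>.
\<close>

lemma local_homeomorphism_sections:
  assumes "local_homeomorphism f"
  obtains N \<sigma> where "\<And>x. open (N x)" "\<And>x. x \<in> N x" "\<And>x. open (f ` N x)"
    "\<And>x. homeomorphism (N x) (f ` N x) f (\<sigma> x)"
  using assms unfolding local_homeomorphism_def by metis

lemma open_range_local_homeomorphism:
  assumes "local_homeomorphism f"
  shows "open (range f)"
proof -
  obtain N \<sigma> where "\<And>x. open (f ` N x)" "\<And>x. x \<in> N x"
    using local_homeomorphism_sections[OF assms] by metis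
  moreover have "range f = (\<Union>x. f ` N x)"
    using calculation(2) by blast
  ultimately show ?thesis by auto
qed

lemma finite_fibre_compact_local_homeomorphism:
  assumes "local_homeomorphism f" "compact K"
  shows "finite (K \<inter> f -` {y})"
proof -
  obtain N \<sigma> where N: "\<And>x. open (N x)" "\<And>x. x \<in> N x"
    and hom: "\<And>x. homeomorphism (N x) (f ` N x) f (\<sigma> x)"
    using local_homeomorphism_sections[OF assms(1)] by metis
  obtain P where P: "P \<subseteq> K" "finite P" "K \<subseteq> (\<Union>x\<in>P. N x)"
    using compactE_image[OF assms(2), of K N] N by blast
  have "K \<inter> f -` {y} \<subseteq> (\<Union>x\<in>P. \<sigma> x ` {y})"
  proof
    fix z assume "z \<in> K \<inter> f -` {y}"
    then obtain x where "x \<in> P" "z \<in> N x" "f z = y" using P(3) by blast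
    then show "z \<in> (\<Union>x\<in>P. \<sigma> x ` {y})"
      using hom[of x] unfolding homeomorphism_def by force
  qed
  then show ?thesis using P(2) finite_subset by blast
qed

lemma finite_disjoint_open_neighbourhoods:
  fixes B :: "'a::t2_space set"
  assumes "finite B"
  obtains D :: "'a \<Rightarrow> 'a set" where "\<And>x. open (D x)" "\<And>x. x \<in> D x" "disjoint_family_on D B"
proof -
  have separation: "\<exists>UV. x \<noteq> y \<longrightarrow> open (fst UV) \<and> open (snd UV) \<and>
      x \<in> fst UV \<and> y \<in> snd UV \<and> fst UV \<inter> snd UV = {}" for x y :: 'a
  proof (cases "x = y")
    case False
    then obtain U V where "open U" "open V" "x \<in> U" "y \<in> V" "U \<inter> V = {}"
      using hausdorff[OF False] by blast
    then show ?thesis by (intro exI[of _ "(U, V)"]) simp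
  qed simp
  have "\<exists>P :: 'a \<Rightarrow> 'a \<Rightarrow> 'a set \<times> 'a set. \<forall>x y. x \<noteq> y \<longrightarrow> open (fst (P x y)) \<and> open (snd (P x y)) \<and>
      x \<in> fst (P x y) \<and> y \<in> snd (P x y) \<and> fst (P x y) \<inter> snd (P x y) = {}"
    by (intro choice allI) (rule separation)
  then obtain P :: "'a \<Rightarrow> 'a \<Rightarrow> 'a set \<times> 'a set" where P: "\<forall>x y. x \<noteq> y \<longrightarrow> open (fst (P x y)) \<and> open (snd (P x y)) \<and>
      x \<in> fst (P x y) \<and> y \<in> snd (P x y) \<and> fst (P x y) \<inter> snd (P x y) = {}"
    by blast
  define U where "U x y = fst (P x y)" for x y
  define V where "V x y = snd (P x y)" for x y
  have UV: "open (U x y)" "open (V x y)" "x \<in> U x y" "y \<in> V x y" "U x y \<inter> V x y = {}"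
    if "x \<noteq> y" for x y
    using P that unfolding U_def V_def by auto
  define D where "D x = (\<Inter>y\<in>B - {x}. U x y \<inter> V y x)" for x
  show thesis
  proof
    fix x
    have "open (U x y \<inter> V y x)" "x \<in> U x y \<inter> V y x" if "y \<noteq> x" for y
      using UV[of x y] UV[of y x] that by auto
    then show "open (D x)" "x \<in> D x"
      unfolding D_def using assms by (auto intro: open_INT)
  next
    show "disjoint_family_on D B"
      unfolding disjoint_family_on_def
    proof (intro ballI impI)
      fix x y assume "x \<in> B" "y \<in> B" "x \<noteq> y"
      then have "D x \<subseteq> U x y" "D y \<subseteq> V x y" unfolding D_def by auto
      then show "D x \<inter> D y = {}" using UV(5)[OF \<open>x \<noteq> y\<close>] by blast
    qed
  qed
qed

lemma homeomorphism_sections_over_discrete: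
  fixes s :: "'a::topological_space \<Rightarrow> 'b::topological_space"
  assumes hom: "\<And>x. x \<in> B \<Longrightarrow> homeomorphism (N x) (s ` N x) s (\<sigma> x)"
    and N: "\<And>x. x \<in> B \<Longrightarrow> open (N x)"
    and V: "open V" "\<And>x. x \<in> B \<Longrightarrow> V \<subseteq> s ` N x"
    and D: "\<And>x. x \<in> B \<Longrightarrow> open (D x)" "\<And>x. x \<in> B \<Longrightarrow> x \<in> D x" "disjoint_family_on D B"
    and \<sigma>D: "\<And>x v. x \<in> B \<Longrightarrow> v \<in> V \<Longrightarrow> \<sigma> x v \<in> D x"
  defines "f \<equiv> \<lambda>(x, v). \<sigma> x v"
  shows "open (f ` (B \<times> V))" "\<exists>g. homeomorphism (B \<times> V) (f ` (B \<times> V)) f g"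
proof -
  have s\<sigma>: "s (\<sigma> x v) = v" "\<sigma> x v \<in> N x" if "x \<in> B" "v \<in> V" for x v
    using hom[OF that(1)] V(2)[OF that(1)] that(2) unfolding homeomorphism_def by auto
  have \<sigma>s: "\<sigma> x (s y) = y" if "x \<in> B" "y \<in> N x" for x y
    using hom[OF that(1)] that(2) unfolding homeomorphism_def by auto
  have open_image: "open (f ` ((B \<times> V) \<inter> Op))" if "open Op" for Op
  proof -
    have "f ` ((B \<times> V) \<inter> Op) = (\<Union>x\<in>B. N x \<inter> s -` (V \<inter> Pair x -` Op))"
    proof (intro equalityI subsetI)
      fix y assume "y \<in> f ` ((B \<times> V) \<inter> Op)"
      then obtain x v where xv: "x \<in> B" "v \<in> V" "(x, v) \<in> Op" and "y = \<sigma> x v"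
        unfolding f_def by auto
      then show "y \<in> (\<Union>x\<in>B. N x \<inter> s -` (V \<inter> Pair x -` Op))"
        using s\<sigma>[OF xv(1,2)] xv by blast
    next
      fix y assume "y \<in> (\<Union>x\<in>B. N x \<inter> s -` (V \<inter> Pair x -` Op))"
      then obtain x where "x \<in> B" "y \<in> N x" "s y \<in> V" "(x, s y) \<in> Op" by auto
      then have "(x, s y) \<in> (B \<times> V) \<inter> Op" "y = f (x, s y)"
        using \<sigma>s unfolding f_def by auto
      then show "y \<in> f ` ((B \<times> V) \<inter> Op)" by blast
    qed
    moreover have "open (N x \<inter> s -` (V \<inter> Pair x -` Op))" if "x \<in> B" for x
    proof -
      have "continuous_on V (Pair x)"
        by (rule continuous_on_Pair[OF continuous_on_const continuous_on_id])
      then have "open (V \<inter> Pair x -` Op)"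
        using V(1) \<open>open Op\<close> by (rule continuous_open_preimage)
      moreover have "continuous_on (N x) s"
        using hom[OF that] unfolding homeomorphism_def by blast
      ultimately show ?thesis
        using continuous_open_preimage N[OF that] by blast
    qed
    ultimately show ?thesis by (simp add: open_UN)
  qed
  have continuous: "continuous_on (B \<times> V) f"
  proof -
    have "continuous_map (top_of_set (B \<times> V)) euclidean f"
    proof (rule pasting_lemma)
      fix x assume "x \<in> B"
      show "openin (top_of_set (B \<times> V)) ((B \<times> V) \<inter> (D x \<times> UNIV))"
        using D(1)[OF \<open>x \<in> B\<close>] by (intro openin_open_Int open_Times) auto
      have "continuous_on (s ` N x) (\<sigma> x)"
        using hom[OF \<open>x \<in> B\<close>] unfolding homeomorphism_def by blast
      then have "continuous_on V (\<sigma> x)"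
        using V(2)[OF \<open>x \<in> B\<close>] by (rule continuous_on_subset)
      then have "continuous_on ((B \<times> V) \<inter> (D x \<times> UNIV)) (\<lambda>p. \<sigma> x (snd p))"
        by (rule continuous_on_compose2[OF _ continuous_on_snd]) auto
      then show "continuous_map (subtopology (top_of_set (B \<times> V)) ((B \<times> V) \<inter> (D x \<times> UNIV)))
          euclidean (\<lambda>p. \<sigma> x (snd p))"
        by (simp add: subtopology_subtopology)
    next
      fix x y p assume "x \<in> B" "y \<in> B"
        and "p \<in> topspace (top_of_set (B \<times> V)) \<inter> ((B \<times> V) \<inter> (D x \<times> UNIV))
          \<inter> ((B \<times> V) \<inter> (D y \<times> UNIV))"
      then have "x = y"
        using D(3) unfolding disjoint_family_on_def by auto
      then show "\<sigma> x (snd p) = \<sigma> y (snd p)" by simp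
    next
      fix p assume "p \<in> topspace (top_of_set (B \<times> V))"
      then show "\<exists>x. x \<in> B \<and> p \<in> (B \<times> V) \<inter> (D x \<times> UNIV) \<and> f p = \<sigma> x (snd p)"
        unfolding f_def using D(2) by auto
    qed
    then show ?thesis by simp
  qed
  have injective: "inj_on f (B \<times> V)"
  proof (rule inj_onI, clarify)
    fix x v y w assume xy: "x \<in> B" "v \<in> V" "y \<in> B" "w \<in> V" and "f (x, v) = f (y, w)"
    then have eq: "\<sigma> x v = \<sigma> y w" unfolding f_def by simp
    then have "v = w" using s\<sigma>(1)[OF xy(1,2)] s\<sigma>(1)[OF xy(3,4)] by simp
    moreover have "\<sigma> x v \<in> D x \<inter> D y" using \<sigma>D[OF xy(1,2)] \<sigma>D[OF xy(3,4)] eq by simp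
    then have "x = y" using D(3) xy unfolding disjoint_family_on_def by blast
    ultimately show "x = y \<and> v = w" by simp
  qed
  have open_map: "openin (top_of_set (f ` (B \<times> V))) (f ` U)"
    if U: "openin (top_of_set (B \<times> V)) U" for U
  proof -
    obtain Op where "open Op" "U = (B \<times> V) \<inter> Op"
      using U unfolding openin_open by blast
    then show ?thesis
      using open_image by (intro open_subset) auto
  qed
  obtain g where "homeomorphism (B \<times> V) (f ` (B \<times> V)) f g"
    using homeomorphism_injective_open_map[OF continuous refl injective open_map] by blast
  then show "\<exists>g. homeomorphism (B \<times> V) (f ` (B \<times> V)) f g" by blast
  show "open (f ` (B \<times> V))" using open_image[OF open_UNIV] by simp
qed

lemma groupoidD:
  assumes "groupoid s r iv mul"
  shows "s (s x) = s x" "r (iv x) = s x" "mul (r x) x = x"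
  using assms unfolding groupoid_def by simp_all

lemma closed_ball_rho_unit:
  assumes "groupoid s r iv mul" "length_function s r iv mul len" "s v = v"
  shows "closed_ball_rho s iv mul len v S = {y. s y = v \<and> len y \<le> S}"
proof -
  have "mul v (iv y) = iv y" if "s y = v" for y
    using groupoidD(2)[OF assms(1), of y] groupoidD(3)[OF assms(1), of "iv y"] that by simp
  moreover have "len (iv y) = len y" for y
    using assms(2) unfolding length_function_def by simp
  ultimately show ?thesis
    unfolding closed_ball_rho_def ext_metric_def using assms(3) by auto
qed

lemma continuous_on_mul_iv:
  assumes "topological_groupoid s r iv mul" "continuous_on A \<sigma>" "continuous_on A \<tau>"
    and "\<And>v. v \<in> A \<Longrightarrow> s (\<sigma> v) = s (\<tau> v)"
  shows "continuous_on A (\<lambda>v. mul (\<sigma> v) (iv (\<tau> v)))"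
proof -
  have mul: "continuous_on {p. s (fst p) = r (snd p)} (\<lambda>p. mul (fst p) (snd p))"
    and iv: "continuous_on UNIV iv" and r_iv: "\<And>x. r (iv x) = s x"
    using assms(1) groupoidD(2) unfolding topological_groupoid_def by auto
  have "continuous_on A (\<lambda>v. iv (\<tau> v))"
    using iv assms(3) by (rule continuous_on_compose2) simp
  then have "continuous_on A (\<lambda>v. (\<sigma> v, iv (\<tau> v)))"
    using assms(2) by (rule continuous_on_Pair[rotated])
  moreover have "(\<lambda>v. (\<sigma> v, iv (\<tau> v))) ` A \<subseteq> {p. s (fst p) = r (snd p)}"
    using assms(4) r_iv by auto
  ultimately show ?thesis
    using continuous_on_compose2[OF mul] by fastforce
qed

lemma eventually_nhds_continuous_preimage:
  assumes "continuous_on A f" "open A" "open T" "a \<in> A" "f a \<in> T"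
  shows "\<forall>\<^sub>F x in nhds a. x \<in> A \<and> f x \<in> T"
proof -
  have "open (A \<inter> f -` T)"
    using assms(1-3) by (rule continuous_open_preimage)
  then have "\<forall>\<^sub>F x in nhds a. x \<in> A \<inter> f -` T"
    by (rule eventually_nhds_in_open) (use assms(4,5) in simp)
  then show ?thesis by simp
qed

locale etale_groupoid_with_length =
  fixes s r iv :: "'g::t2_space \<Rightarrow> 'g" and mul :: "'g \<Rightarrow> 'g \<Rightarrow> 'g" and len :: "'g \<Rightarrow> real"
  assumes etale: "etale_groupoid s r iv mul"
    and length: "length_function s r iv mul len"
    and continuous_len: "continuous_on UNIV len"
    and proper: "proper_length s len"
begin

lemma groupoid: "groupoid s r iv mul"
  and topological_groupoid: "topological_groupoid s r iv mul"
  and continuous_s: "continuous_on UNIV s"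
  and local_homeomorphism_s: "local_homeomorphism s"
  using etale unfolding etale_groupoid_def topological_groupoid_def by auto

lemma len_eq_0_iff: "len x = 0 \<longleftrightarrow> s x = x"
  using length unfolding length_function_def gunits_def by simp

lemma gunits_eq_range: "gunits s = range s"
proof (intro equalityI subsetI)
  fix x assume "x \<in> gunits s"
  then show "x \<in> range s"
    using rangeI[of s x] unfolding gunits_def by simp
next
  fix x assume "x \<in> range s"
  then show "x \<in> gunits s"
    using groupoidD(1)[OF groupoid] unfolding gunits_def by auto
qed

lemma open_gunits: "open (gunits s)"
  unfolding gunits_eq_range by (rule open_range_local_homeomorphism[OF local_homeomorphism_s])

lemma compact_closure_nonunits_bounded: "compact (closure {y. y \<notin> gunits s \<and> len y \<le> T})"
proof -
  have "{y. y \<notin> gunits s \<and> len y \<le> T} \<subseteq> - gunits s" by auto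
  moreover have "bdd_above (len ` {y. y \<notin> gunits s \<and> len y \<le> T})"
    by (rule bdd_aboveI2[of _ _ T]) simp
  ultimately show ?thesis
    using proper unfolding proper_length_def by simp
qed

lemma finite_bounded_fibre: "finite {y. s y = u \<and> len y \<le> T}"
proof -
  define C where "C = closure {y. y \<notin> gunits s \<and> len y \<le> T}"
  have "{y. s y = u \<and> len y \<le> T} \<subseteq> insert u (C \<inter> s -` {u})"
  proof (intro subsetI, elim CollectE conjE)
    fix y assume y: "s y = u" "len y \<le> T"
    show "y \<in> insert u (C \<inter> s -` {u})"
    proof (cases "y \<in> gunits s")
      case True
      then show ?thesis using y(1) unfolding gunits_def by simp
    next
      case False
      then have "y \<in> C" unfolding C_def using y(2) closure_subset by fastforce
      then show ?thesis using y(1) by simp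
    qed
  qed
  moreover have "finite (C \<inter> s -` {u})"
    unfolding C_def using local_homeomorphism_s compact_closure_nonunits_bounded
    by (rule finite_fibre_compact_local_homeomorphism)
  ultimately show ?thesis
    by (simp add: finite_subset)
qed

lemma exists_radius_above_fibre_lengths:
  assumes "\<epsilon> > 0"
  obtains S where "R \<le> S" "S < R + \<epsilon>" "\<And>y. s y = u \<Longrightarrow> len y \<le> S \<Longrightarrow> len y < S"
proof -
  define L where "L = len ` {y. s y = u \<and> len y \<le> R + \<epsilon>}"
  have "finite L"
    unfolding L_def using finite_bounded_fibre by (rule finite_imageI)
  moreover have "infinite {R..<R + \<epsilon>}"
    using assms by (simp add: infinite_Ico)
  ultimately have "infinite ({R..<R + \<epsilon>} - L)"
    by (rule Diff_infinite_finite)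
  then obtain S where S: "S \<in> {R..<R + \<epsilon>}" "S \<notin> L"
    using infinite_imp_nonempty by blast
  show thesis
  proof (rule that)
    show "R \<le> S" "S < R + \<epsilon>" using S(1) by auto
    fix y assume "s y = u" "len y \<le> S"
    then have "len y \<in> L" unfolding L_def using S(1) by auto
    then show "len y < S" using S(2) \<open>len y \<le> S\<close> by (cases "len y = S") auto
  qed
qed

lemma eventually_bounded_fibre_subset:
  assumes "open U" "u \<in> U" "{y. s y = u \<and> len y \<le> S} \<subseteq> U"
  shows "\<forall>\<^sub>F v in nhds u. \<forall>y. s y = v \<longrightarrow> len y \<le> S \<longrightarrow> y \<in> U"
proof -
  define C where "C = closure {y. y \<notin> gunits s \<and> len y \<le> S}"
  have "C \<subseteq> {y. len y \<le> S}"
    unfolding C_def using closed_Collect_le[OF continuous_len continuous_on_const]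
    by (intro closure_minimal) auto
  then have u_notin: "u \<notin> s ` (C - U)"
    using assms(3) by auto
  have "compact (C - U)"
    unfolding C_def Diff_eq using compact_closure_nonunits_bounded assms(1)
    by (intro compact_Int_closed) auto
  then have "compact (s ` (C - U))"
    by (rule compact_continuous_image[OF continuous_on_subset[OF continuous_s subset_UNIV]])
  then have "open (- s ` (C - U))"
    by (simp add: compact_imp_closed open_Compl)
  then have "\<forall>\<^sub>F v in nhds u. v \<in> - s ` (C - U)"
    by (rule eventually_nhds_in_open) (simp add: u_notin)
  moreover have "\<forall>\<^sub>F v in nhds u. v \<in> U"
    using assms(1,2) by (rule eventually_nhds_in_open)
  ultimately have eventually_outside: "\<forall>\<^sub>F v in nhds u. v \<in> - s ` (C - U) \<and> v \<in> U"
    by (rule eventually_conj)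
  have in_U: "y \<in> U" if "v \<in> - s ` (C - U)" "v \<in> U" "s y = v" "len y \<le> S" for v y
  proof (cases "y \<in> gunits s")
    case True
    then show ?thesis using that(2,3) unfolding gunits_def by simp
  next
    case False
    then have "y \<in> C" unfolding C_def using that(4) closure_subset by fastforce
    then show ?thesis using that(1,3) by blast
  qed
  show ?thesis
    using eventually_outside by (rule eventually_mono) (use in_U in blast)
qed

lemma trivializing_neighbourhood:
  assumes "s u = u" "\<epsilon> > 0" "0 \<le> S"
    and B: "B = {y. s y = u \<and> len y \<le> S}" "\<And>y. y \<in> B \<Longrightarrow> len y < S"
    and N: "\<And>x. open (N x)" "\<And>x. x \<in> N x" "\<And>x. open (s ` N x)"
    and hom: "\<And>x. homeomorphism (N x) (s ` N x) s (\<sigma> x)"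
    and D: "\<And>x. open (D x)" "\<And>x. x \<in> D x"
  obtains V where "open V" "u \<in> V" "V \<subseteq> gunits s" "V \<subseteq> N u" "\<And>x. x \<in> B \<Longrightarrow> V \<subseteq> s ` N x"
    "\<And>x v. x \<in> B \<Longrightarrow> v \<in> V \<Longrightarrow> \<sigma> x v \<in> D x \<and> len (\<sigma> x v) < S"
    "\<And>v y. v \<in> V \<Longrightarrow> s y = v \<Longrightarrow> len y \<le> S \<Longrightarrow> y \<in> (\<Union>x\<in>B. N x)"
    "\<And>x y v. x \<in> B \<Longrightarrow> y \<in> B \<Longrightarrow> v \<in> V \<Longrightarrow>
      \<bar>len (mul (\<sigma> x v) (iv (\<sigma> y v))) - len (mul x (iv y))\<bar> < \<epsilon>"
proof -
  have x_sect: "u \<in> s ` N x" "\<sigma> x u = x" if "x \<in> B" for x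
    using homeomorphism_apply1[OF hom N(2)] N(2)[of x] that unfolding B by auto
  have cont_\<sigma>: "continuous_on (s ` N x) (\<sigma> x)" for x
    using hom by (rule homeomorphism_cont2)
  have "u \<in> B"
    using assms(1,3) len_eq_0_iff[THEN iffD2, OF assms(1)] unfolding B by simp
  then have "\<forall>\<^sub>F v in nhds u. \<forall>y. s y = v \<longrightarrow> len y \<le> S \<longrightarrow> y \<in> (\<Union>x\<in>B. N x)"
    using N(1,2) by (intro eventually_bounded_fibre_subset) (auto simp: B)
  moreover have "\<forall>\<^sub>F v in nhds u. v \<in> gunits s"
    using open_gunits by (rule eventually_nhds_in_open) (simp add: gunits_def assms(1))
  moreover have "\<forall>\<^sub>F v in nhds u. v \<in> N u"
    using N(1,2) by (rule eventually_nhds_in_open)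
  moreover have "\<forall>\<^sub>F v in nhds u. \<forall>x\<in>B. v \<in> s ` N x \<and> \<sigma> x v \<in> D x \<and> len (\<sigma> x v) < S"
  proof (intro eventually_ball_finite ballI)
    fix x assume "x \<in> B"
    have "\<forall>\<^sub>F v in nhds u. v \<in> s ` N x \<and> \<sigma> x v \<in> D x"
      using cont_\<sigma> N(3) D x_sect[OF \<open>x \<in> B\<close>] by (intro eventually_nhds_continuous_preimage) auto
    moreover have "\<forall>\<^sub>F v in nhds u. v \<in> s ` N x \<and> len (\<sigma> x v) \<in> {..<S}"
      using continuous_on_compose2[OF continuous_len cont_\<sigma> subset_UNIV] N(3) x_sect[OF \<open>x \<in> B\<close>]
        B(2)[OF \<open>x \<in> B\<close>]
      by (intro eventually_nhds_continuous_preimage) auto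
    ultimately show "\<forall>\<^sub>F v in nhds u. v \<in> s ` N x \<and> \<sigma> x v \<in> D x \<and> len (\<sigma> x v) < S"
      by eventually_elim simp
  qed (simp add: B finite_bounded_fibre)
  moreover have "\<forall>\<^sub>F v in nhds u. \<forall>x\<in>B. \<forall>y\<in>B.
      \<bar>len (mul (\<sigma> x v) (iv (\<sigma> y v))) - len (mul x (iv y))\<bar> < \<epsilon>"
  proof (intro eventually_ball_finite ballI)
    fix x y assume "x \<in> B" "y \<in> B"
    let ?A = "s ` N x \<inter> s ` N y" and ?c = "len (mul x (iv y))"
    have "continuous_on ?A (\<lambda>v. mul (\<sigma> x v) (iv (\<sigma> y v)))"
      using topological_groupoid continuous_on_subset[OF cont_\<sigma>] continuous_on_subset[OF cont_\<sigma>]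
    proof (rule continuous_on_mul_iv)
      show "s (\<sigma> x v) = s (\<sigma> y v)" if "v \<in> ?A" for v
        using homeomorphism_apply2[OF hom] that by simp
    qed auto
    then have "continuous_on ?A (\<lambda>v. len (mul (\<sigma> x v) (iv (\<sigma> y v))))"
      by (rule continuous_on_compose2[OF continuous_len _ subset_UNIV])
    moreover have "open ?A" using N(3) by (intro open_Int)
    moreover have "u \<in> ?A" using x_sect \<open>x \<in> B\<close> \<open>y \<in> B\<close> by simp
    moreover have "len (mul (\<sigma> x u) (iv (\<sigma> y u))) \<in> {?c - \<epsilon><..<?c + \<epsilon>}"
      using x_sect \<open>x \<in> B\<close> \<open>y \<in> B\<close> assms(2) by simp
    ultimately have "\<forall>\<^sub>F v in nhds u. v \<in> ?A \<and> len (mul (\<sigma> x v) (iv (\<sigma> y v))) \<in> {?c - \<epsilon><..<?c + \<epsilon>}"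
      by (rule eventually_nhds_continuous_preimage[OF _ _ open_greaterThanLessThan])
    then show "\<forall>\<^sub>F v in nhds u. \<bar>len (mul (\<sigma> x v) (iv (\<sigma> y v))) - ?c\<bar> < \<epsilon>"
      by eventually_elim (simp add: abs_diff_less_iff)
  qed (simp_all add: B finite_bounded_fibre)
  ultimately have "\<forall>\<^sub>F v in nhds u. (\<forall>y. s y = v \<longrightarrow> len y \<le> S \<longrightarrow> y \<in> (\<Union>x\<in>B. N x)) \<and>
      v \<in> gunits s \<and> v \<in> N u \<and> (\<forall>x\<in>B. v \<in> s ` N x \<and> \<sigma> x v \<in> D x \<and> len (\<sigma> x v) < S) \<and>
      (\<forall>x\<in>B. \<forall>y\<in>B. \<bar>len (mul (\<sigma> x v) (iv (\<sigma> y v))) - len (mul x (iv y))\<bar> < \<epsilon>)"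
    by eventually_elim (intro conjI; assumption)
  then obtain V where "open V" "u \<in> V" and V: "\<forall>v\<in>V.
      (\<forall>y. s y = v \<longrightarrow> len y \<le> S \<longrightarrow> y \<in> (\<Union>x\<in>B. N x)) \<and>
      v \<in> gunits s \<and> v \<in> N u \<and> (\<forall>x\<in>B. v \<in> s ` N x \<and> \<sigma> x v \<in> D x \<and> len (\<sigma> x v) < S) \<and>
      (\<forall>x\<in>B. \<forall>y\<in>B. \<bar>len (mul (\<sigma> x v) (iv (\<sigma> y v))) - len (mul x (iv y))\<bar> < \<epsilon>)"
    unfolding eventually_nhds by (elim exE conjE) (rule that)
  show thesis
  proof (rule that[OF \<open>open V\<close> \<open>u \<in> V\<close>])
    show "V \<subseteq> gunits s" "V \<subseteq> N u" "\<And>x. x \<in> B \<Longrightarrow> V \<subseteq> s ` N x"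
      using V by auto
    show "\<And>x v. x \<in> B \<Longrightarrow> v \<in> V \<Longrightarrow> \<sigma> x v \<in> D x \<and> len (\<sigma> x v) < S"
      using V by auto
    show "\<And>v y. v \<in> V \<Longrightarrow> s y = v \<Longrightarrow> len y \<le> S \<Longrightarrow> y \<in> (\<Union>x\<in>B. N x)"
      using V by simp
    show "\<And>x y v. x \<in> B \<Longrightarrow> y \<in> B \<Longrightarrow> v \<in> V \<Longrightarrow>
        \<bar>len (mul (\<sigma> x v) (iv (\<sigma> y v))) - len (mul x (iv y))\<bar> < \<epsilon>"
      using V by simp
  qed
qed

lemma local_trivialization:
  assumes "u \<in> gunits s" "\<epsilon> > 0" "0 \<le> S"
    and short: "\<And>y. s y = u \<Longrightarrow> len y \<le> S \<Longrightarrow> len y < S"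
  defines "B \<equiv> closed_ball_rho s iv mul len u S"
  obtains V W f where "openin (top_of_set (gunits s)) V" "u \<in> V" "open W"
    "\<exists>g. homeomorphism (B \<times> V) W f g"
    "\<forall>v\<in>V. f (u, v) = v"
    "\<forall>x\<in>B. f (x, u) = x"
    "\<forall>v\<in>V. f ` (B \<times> {v}) = closed_ball_rho s iv mul len v S"
    "\<forall>x\<in>B. \<forall>y\<in>B. \<forall>v\<in>V.
       \<bar>ext_metric s iv mul len x y - ext_metric s iv mul len (f (x, v)) (f (y, v))\<bar> < ereal \<epsilon>"
proof -
  have su: "s u = u" using assms(1) unfolding gunits_def by simp
  have B_eq: "B = {y. s y = u \<and> len y \<le> S}"
    unfolding B_def using groupoid length su by (rule closed_ball_rho_unit)
  have "finite B"
    unfolding B_eq by (rule finite_bounded_fibre)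
  obtain D :: "'g \<Rightarrow> 'g set" where D: "\<And>x. open (D x)" "\<And>x. x \<in> D x" "disjoint_family_on D B"
    by (fact finite_disjoint_open_neighbourhoods[OF \<open>finite B\<close>])
  obtain N \<sigma> where N: "\<And>x. open (N x)" "\<And>x. x \<in> N x" "\<And>x. open (s ` N x)"
    and hom: "\<And>x. homeomorphism (N x) (s ` N x) s (\<sigma> x)"
    by (fact local_homeomorphism_sections[OF local_homeomorphism_s])
  have short_B: "len y < S" if "y \<in> B" for y
    using short that unfolding B_eq by simp
  obtain V where V: "open V" "u \<in> V" "V \<subseteq> gunits s" "V \<subseteq> N u"
    "\<And>x. x \<in> B \<Longrightarrow> V \<subseteq> s ` N x"
    "\<And>x v. x \<in> B \<Longrightarrow> v \<in> V \<Longrightarrow> \<sigma> x v \<in> D x \<and> len (\<sigma> x v) < S"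
    "\<And>v y. v \<in> V \<Longrightarrow> s y = v \<Longrightarrow> len y \<le> S \<Longrightarrow> y \<in> (\<Union>x\<in>B. N x)"
    "\<And>x y v. x \<in> B \<Longrightarrow> y \<in> B \<Longrightarrow> v \<in> V \<Longrightarrow>
      \<bar>len (mul (\<sigma> x v) (iv (\<sigma> y v))) - len (mul x (iv y))\<bar> < \<epsilon>"
    using trivializing_neighbourhood[OF su assms(2,3) B_eq short_B N hom D(1,2)] by blast
  define f where "f = (\<lambda>(x, v). \<sigma> x v)"
  have "\<sigma> x v \<in> D x" if "x \<in> B" "v \<in> V" for x v
    using V(6)[OF that] by simp
  note homeo = homeomorphism_sections_over_discrete[OF hom N(1) V(1,5) D this, folded f_def]
  have s_f: "s (f (x, v)) = v" if "x \<in> B" "v \<in> V" for x v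
    using homeomorphism_apply2[OF hom] V(5)[OF that(1)] that(2) unfolding f_def by auto
  have unit_V: "s v = v" if "v \<in> V" for v
    using V(3) that unfolding gunits_def by auto
  show thesis
  proof (rule that[OF _ V(2) homeo])
    show "openin (top_of_set (gunits s)) V"
      using V(3,1) by (rule open_subset)
    show "\<forall>v\<in>V. f (u, v) = v"
      using homeomorphism_apply1[OF hom] V(4) unit_V unfolding f_def by (metis case_prod_conv subsetD)
    show "\<forall>x\<in>B. f (x, u) = x"
      using homeomorphism_apply1[OF hom N(2)] unfolding f_def B_eq by auto
    show "\<forall>v\<in>V. f ` (B \<times> {v}) = closed_ball_rho s iv mul len v S"
    proof
      fix v assume "v \<in> V"
      have "f ` (B \<times> {v}) \<subseteq> {y. s y = v \<and> len y \<le> S}"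
        using s_f V(6) \<open>v \<in> V\<close> unfolding f_def by (auto intro: less_imp_le)
      moreover have "y \<in> f ` (B \<times> {v})" if y: "s y = v" "len y \<le> S" for y
      proof -
        obtain x where "x \<in> B" "y \<in> N x" using V(7)[OF \<open>v \<in> V\<close> y] by blast
        then have "y = f (x, v)"
          using homeomorphism_apply1[OF hom \<open>y \<in> N x\<close>] y(1) unfolding f_def by simp
        then show ?thesis using \<open>x \<in> B\<close> by blast
      qed
      ultimately show "f ` (B \<times> {v}) = closed_ball_rho s iv mul len v S"
        unfolding closed_ball_rho_unit[OF groupoid length unit_V[OF \<open>v \<in> V\<close>]] by blast
    qed
    show "\<forall>x\<in>B. \<forall>y\<in>B. \<forall>v\<in>V.
       \<bar>ext_metric s iv mul len x y - ext_metric s iv mul len (f (x, v)) (f (y, v))\<bar> < ereal \<epsilon>"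
    proof (intro ballI)
      fix x y v assume xyv: "x \<in> B" "y \<in> B" "v \<in> V"
      then show "\<bar>ext_metric s iv mul len x y - ext_metric s iv mul len (f (x, v)) (f (y, v))\<bar> < ereal \<epsilon>"
        using V(8)[OF xyv] s_f[OF xyv(1,3)] s_f[OF xyv(2,3)]
        unfolding ext_metric_def f_def B_eq by (simp add: abs_minus_commute)
    qed
  qed
qed

end

theorem mainTheorem15:
  fixes s r iv :: "'g::t2_space \<Rightarrow> 'g" and mul :: "'g \<Rightarrow> 'g \<Rightarrow> 'g"
    and len :: "'g \<Rightarrow> real" and u :: 'g and R \<epsilon> :: real
  assumes "etale_groupoid s r iv mul"
    and "locally_compact_space (euclidean :: 'g topology)"
    and "sigma_compact_space TYPE('g)"
    and "length_function s r iv mul len"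
    and "continuous_on UNIV len" and "proper_length s len" and "controlled_length len"
    and "u \<in> gunits s" and "R > 0" and "\<epsilon> > 0"
  shows "\<exists>S V W (f :: 'g \<times> 'g \<Rightarrow> 'g).
    R \<le> S \<and> S < R + \<epsilon> \<and>
    openin (top_of_set (gunits s)) V \<and> u \<in> V \<and> open W \<and>
    (\<exists>g. homeomorphism (closed_ball_rho s iv mul len u S \<times> V) W f g) \<and>
    (\<forall>v\<in>V. f (u, v) = v) \<and>
    (\<forall>x\<in>closed_ball_rho s iv mul len u S. f (x, u) = x) \<and>
    (\<forall>v\<in>V. f ` (closed_ball_rho s iv mul len u S \<times> {v}) = closed_ball_rho s iv mul len v S) \<and>
    (\<forall>x\<in>closed_ball_rho s iv mul len u S. \<forall>y\<in>closed_ball_rho s iv mul len u S. \<forall>v\<in>V.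
       \<bar>ext_metric s iv mul len x y - ext_metric s iv mul len (f (x, v)) (f (y, v))\<bar> < ereal \<epsilon>)"
proof -
  interpret etale_groupoid_with_length s r iv mul len
    using assms(1,4,5,6) by unfold_locales
  obtain S where S: "R \<le> S" "S < R + \<epsilon>" "\<And>y. s y = u \<Longrightarrow> len y \<le> S \<Longrightarrow> len y < S"
    by (fact exists_radius_above_fibre_lengths[OF assms(10)])
  from S(1) assms(9) have "0 \<le> S" by simp
  then show ?thesis
  proof (rule local_trivialization[OF assms(8,10) _ S(3)])
    fix V W f assume props: "openin (top_of_set (gunits s)) V" "u \<in> V" "open W"
      "\<exists>g. homeomorphism (closed_ball_rho s iv mul len u S \<times> V) W f g"
      "\<forall>v\<in>V. f (u, v) = v"
      "\<forall>x\<in>closed_ball_rho s iv mul len u S. f (x, u) = x"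
      "\<forall>v\<in>V. f ` (closed_ball_rho s iv mul len u S \<times> {v}) = closed_ball_rho s iv mul len v S"
      "\<forall>x\<in>closed_ball_rho s iv mul len u S. \<forall>y\<in>closed_ball_rho s iv mul len u S. \<forall>v\<in>V.
         \<bar>ext_metric s iv mul len x y - ext_metric s iv mul len (f (x, v)) (f (y, v))\<bar> < ereal \<epsilon>"
    show ?thesis
      by (intro exI[of _ S] exI[of _ V] exI[of _ W] exI[of _ f] conjI) (fact S(1,2) props)+
  qed
qed

end
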